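(* Let $f(z)=z+\sum_{n=2}^{\infty}a_nz^n$ belong to $\mathcal{S}^*_{ch}$, and let $\Gamma_1,\Gamma_2$ be the first two logarithmic inverse coefficients of $f$, i.e. $$\Gamma_1=-\tfrac12 a_2,\qquad \Gamma_2=-\tfrac12\Big(a_3-\tfrac32 a_2^2\Big).$$ Then $|\Gamma_1|\le\frac12$ and $|\Gamma_2|\le\frac38$. Both inequalities are sharp, with equality for $f_1(z)=z\exp\left(\int_0^z\frac{t+\cosh t-1}{t}\,dt\right)$, which belongs to $\mathcal{S}^*_{ch}$.
   Context: $\mathbb{D}=\{z\in\mathbb{C}:|z|<1\}$. $\mathcal{A}$ is the class of analytic $f$ on $\mathbb{D}$ with $f(0)=0$, $f'(0)=1$. For analytic $g,h$ on $\mathbb{D}$, $g\prec h$ means there is an analytic $\omega$ on $\mathbb{D}$ with $\omega(0)=0$, $|\omega(z)|<1$, and $g=h\circ\omega$. $\mathcal{S}^*_{ch}$ is the class of $f\in\mathcal{A}$ with $\frac{zf'(z)}{f(z)}\prec z+\cosh z$ on $\mathbb{D}$. For such $f$ with inverse $F=f^{-1}$ defined near $0$, the logarithmic inverse coefficients $\Gamma_n$ are defined by $\log\frac{f^{-1}(w)}{w}=2\sum_{n\ge1}\Gamma_nw^n$ for $w$ near $0$; the displayed formulas for $\Gamma_1,\Gamma_2$ in terms of $a_2,a_3$ follow from this definition. *)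

theory Defs
  imports "HOL-Complex_Analysis.Complex_Analysis"
begin

definition subordinate :: "(complex \<Rightarrow> complex) \<Rightarrow> (complex \<Rightarrow> complex) \<Rightarrow> bool" where
  "subordinate g h \<longleftrightarrow>
     g holomorphic_on ball 0 1 \<and> h holomorphic_on ball 0 1 \<and>
     (\<exists>\<omega>. \<omega> holomorphic_on ball 0 1 \<and> \<omega> 0 = 0 \<and>
          (\<forall>z\<in>ball 0 1. norm (\<omega> z) < 1 \<and> g z = h (\<omega> z)))"

definition classA :: "(complex \<Rightarrow> complex) \<Rightarrow> bool" where
  "classA f \<longleftrightarrow> f holomorphic_on ball 0 1 \<and> f 0 = 0 \<and> deriv f 0 = 1"

definition logderiv_quot :: "(complex \<Rightarrow> complex) \<Rightarrow> complex \<Rightarrow> complex" where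
  "logderiv_quot f z = (if z = 0 then 1 else z * deriv f z / f z)"

text \<open>The class S*_ch: z f'/f subordinate to z + cosh z (f nonvanishing off 0, so
  that the quotient is defined).\<close>
definition Sch :: "(complex \<Rightarrow> complex) \<Rightarrow> bool" where
  "Sch f \<longleftrightarrow> classA f \<and> (\<forall>z\<in>ball 0 1. z \<noteq> 0 \<longrightarrow> f z \<noteq> 0) \<and>
     subordinate (logderiv_quot f) (\<lambda>z. z + cosh z)"

definition coeff :: "(complex \<Rightarrow> complex) \<Rightarrow> nat \<Rightarrow> complex" where
  "coeff f n = (deriv ^^ n) f 0 / of_nat (fact n)"

definition Gamma1 :: "(complex \<Rightarrow> complex) \<Rightarrow> complex" where
  "Gamma1 f = - (1/2) * coeff f 2"

definition Gamma2 :: "(complex \<Rightarrow> complex) \<Rightarrow> complex" where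
  "Gamma2 f = - (1/2) * (coeff f 3 - (3/2) * (coeff f 2)^2)"

definition f1_integrand :: "complex \<Rightarrow> complex" where
  "f1_integrand t = (if t = 0 then 1 else (t + cosh t - 1) / t)"

definition f1 :: "complex \<Rightarrow> complex" where
  "f1 z = z * exp (contour_integral (linepath 0 z) f1_integrand)"

end

theory Submission
  imports Defs "HOL-Complex_Analysis.Riemann_Mapping"
begin

(* Write z f'(z) / f(z) = phi (omega z) with phi w = w + cosh w and omega a Schwarz function.
   Comparing Taylor coefficients of z f' = f (phi o omega) up to z^3 gives a_2 = c and
   a_3 = 3 c^2 / 4 + omega''(0) / 4 with c = omega'(0), so Gamma_1 = - c / 2 and
   Gamma_2 = (3 c^2 - omega''(0)) / 8.  Schwarz's lemma gives |c| <= 1, and the Schwarz-Pick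
   inequality for omega(z)/z gives |omega''(0)| <= 2 (1 - |c|^2); hence
   |Gamma_2| <= 3 |c|^2 / 8 + (1 - |c|^2) / 4 <= 3/8.  Equality holds for omega z = z, whose
   solution is f1. *)

lemma holomorphic_on_cosh' [holomorphic_intros]:
  "f holomorphic_on A \<Longrightarrow> (\<lambda>x. cosh (f x :: complex)) holomorphic_on A"
  unfolding cosh_def by (intro holomorphic_intros)

lemma funpow_deriv_deriv: "(deriv ^^ k) (deriv f) = (deriv ^^ Suc k) f"
  by (simp add: funpow_Suc_right del: funpow.simps)

lemma coeff_2_3_of_logderiv_eq:
  fixes f q :: "complex \<Rightarrow> complex"
  assumes S: "open S" "0 \<in> S" and hf: "f holomorphic_on S" and hq: "q holomorphic_on S"
    and f0: "f 0 = 0" and df0: "deriv f 0 = 1"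
    and eq: "\<And>z. z \<in> S \<Longrightarrow> z * deriv f z = f z * q z"
  shows "coeff f 2 = deriv q 0"
    and "coeff f 3 = (deriv q 0 ^ 2 + deriv (deriv q) 0 / 2) / 2"
proof -
  have hdf: "deriv f holomorphic_on S"
    using hf S(1) by (rule holomorphic_deriv)
  have "(deriv ^^ n) (\<lambda>z. z * deriv f z) 0 = (deriv ^^ n) (\<lambda>z. f z * q z) 0" for n
    by (rule higher_deriv_transform_within_open[OF _ _ S])
       (auto intro!: holomorphic_intros hdf hf hq simp: eq)
  moreover have "(deriv ^^ n) (\<lambda>z. z * deriv f z) 0 =
      (\<Sum>i = 0..n. of_nat (n choose i) * (deriv ^^ i) (\<lambda>w. w) 0 * (deriv ^^ (n-i)) (deriv f) 0)" for n
    by (rule higher_deriv_mult[OF _ hdf S]) (intro holomorphic_intros)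
  moreover have "(deriv ^^ n) (\<lambda>z. f z * q z) 0 =
      (\<Sum>i = 0..n. of_nat (n choose i) * (deriv ^^ i) f 0 * (deriv ^^ (n-i)) q 0)" for n
    by (rule higher_deriv_mult[OF hf hq S])
  ultimately have taylor: "(\<Sum>i = 0..n. of_nat (n choose i) * (deriv ^^ i) (\<lambda>w. w) 0 * (deriv ^^ Suc (n-i)) f 0)
      = (\<Sum>i = 0..n. of_nat (n choose i) * (deriv ^^ i) f 0 * (deriv ^^ (n-i)) q 0)" for n
    by (simp add: funpow_deriv_deriv)
  have q0: "q 0 = 1"
    using taylor[of 1] by (simp add: f0 df0)
  have f2: "(deriv ^^ 2) f 0 = 2 * deriv q 0"
    using taylor[of 2] by (simp add: numeral_2_eq_2 f0 df0 q0)
  have f3: "2 * (deriv ^^ 3) f 0 = 3 * deriv (deriv q) 0 + 3 * (deriv ^^ 2) f 0 * deriv q 0"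
    using taylor[of 3] by (simp add: numeral_2_eq_2 numeral_3_eq_3 f0 df0 q0 algebra_simps)
  show "coeff f 2 = deriv q 0"
    using f2 by (simp add: coeff_def)
  show "coeff f 3 = (deriv q 0 ^ 2 + deriv (deriv q) 0 / 2) / 2"
    using f3 f2 by (simp add: coeff_def numeral_3_eq_3 field_simps power2_eq_square)
qed

lemma deriv_deriv_compose:
  fixes \<phi> \<omega> :: "complex \<Rightarrow> complex"
  assumes S: "open S" "z \<in> S" and T: "open T" and h\<phi>: "\<phi> holomorphic_on T"
    and h\<omega>: "\<omega> holomorphic_on S" and \<omega>ST: "\<omega> ` S \<subseteq> T"
  shows "deriv (deriv (\<lambda>x. \<phi> (\<omega> x))) z =
           deriv (deriv \<phi>) (\<omega> z) * deriv \<omega> z ^ 2 + deriv \<phi> (\<omega> z) * deriv (deriv \<omega>) z"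
proof -
  have chain: "deriv (\<lambda>x. \<phi> (\<omega> x)) x = deriv \<phi> (\<omega> x) * deriv \<omega> x" if "x \<in> S" for x
    using that \<omega>ST by (intro deriv_compose_analytic holomorphic_on_imp_analytic_at[OF h\<phi> T]
        holomorphic_on_imp_analytic_at[OF h\<omega> S(1)]) auto
  have "\<forall>\<^sub>F x in nhds z. deriv (\<lambda>x. \<phi> (\<omega> x)) x = deriv \<phi> (\<omega> x) * deriv \<omega> x"
    using eventually_nhds_in_open[OF S] by (rule eventually_mono) (use chain in auto)
  then have "deriv (deriv (\<lambda>x. \<phi> (\<omega> x))) z = deriv (\<lambda>x. deriv \<phi> (\<omega> x) * deriv \<omega> x) z"
    by (rule deriv_cong_ev) simp
  moreover have "((\<lambda>x. deriv \<phi> (\<omega> x) * deriv \<omega> x) has_field_derivative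
      deriv (deriv \<phi>) (\<omega> z) * deriv \<omega> z ^ 2 + deriv \<phi> (\<omega> z) * deriv (deriv \<omega>) z) (at z)"
  proof -
    have "\<omega> z \<in> T" using \<omega>ST S(2) by blast
    then have "(deriv \<phi> has_field_derivative deriv (deriv \<phi>) (\<omega> z)) (at (\<omega> z))"
      by (intro holomorphic_derivI[OF holomorphic_deriv[OF h\<phi> T] T])
    moreover have "(\<omega> has_field_derivative deriv \<omega> z) (at z)"
      using holomorphic_derivI[OF h\<omega> S] .
    moreover have "(deriv \<omega> has_field_derivative deriv (deriv \<omega>) z) (at z)"
      using holomorphic_derivI[OF holomorphic_deriv[OF h\<omega> S(1)] S] .
    ultimately show ?thesis
      by (auto intro!: derivative_eq_intros DERIV_chain2[where f = "deriv \<phi>"]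
          simp: power2_eq_square algebra_simps)
  qed
  ultimately show ?thesis
    using DERIV_imp_deriv by metis
qed

lemma Schwarz_Pick_deriv_0:
  assumes hh: "h holomorphic_on ball 0 1" and lt: "\<And>z. norm z < 1 \<Longrightarrow> norm (h z) < 1"
  shows "norm (deriv h 0) \<le> 1 - norm (h 0) ^ 2"
proof -
  define c where "c = h 0"
  have c: "norm c < 1" using lt[of 0] by (simp add: c_def)
  define g where "g = (\<lambda>z. Moebius_function 0 c (h z))"
  have hg: "g holomorphic_on ball 0 1"
    unfolding g_def
    by (rule holomorphic_on_compose_gen[OF hh Moebius_function_holomorphic[OF c], unfolded o_def])
       (auto simp: lt)
  have g0: "g 0 = 0" by (simp add: g_def c_def Moebius_function_eq_zero)
  have glt: "norm z < 1 \<Longrightarrow> norm (g z) < 1" for z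
    unfolding g_def using Moebius_function_norm_lt_1[OF c lt] by blast
  have dg: "norm (deriv g 0) \<le> 1"
    using Schwarz_Lemma(2)[OF hg g0 glt, of 0] by simp
  have pos: "1 - norm c ^ 2 > 0"
    using c by (simp add: power_less_one_iff abs_square_less_1)
  have cc: "1 - cnj c * c = of_real (1 - norm c ^ 2)"
    by (simp only: of_real_diff of_real_1 complex_norm_square mult.commute)
  have cc_ne: "1 - cnj c * c \<noteq> 0"
    using pos unfolding cc of_real_eq_0_iff by linarith
  have "(h has_field_derivative deriv h 0) (at 0)"
    using holomorphic_derivI[OF hh] by auto
  then have "(g has_field_derivative deriv h 0 / (1 - cnj c * c)) (at 0)"
    unfolding g_def Moebius_function_simple using cc_ne
    by (auto intro!: derivative_eq_intros simp: c_def[symmetric])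
  then have "deriv g 0 = deriv h 0 / (1 - cnj c * c)"
    by (rule DERIV_imp_deriv)
  then have "deriv h 0 = deriv g 0 * of_real (1 - norm c ^ 2)"
    using cc_ne by (simp add: cc)
  then have "norm (deriv h 0) = norm (deriv g 0) * (1 - norm c ^ 2)"
    by (simp only: norm_mult norm_of_real abs_of_pos[OF pos])
  also have "\<dots> \<le> 1 - norm c ^ 2"
    using dg pos by (simp add: mult_left_le_one_le)
  finally show ?thesis by (simp add: c_def)
qed

lemma Schwarz_quotient_norm_less_1:
  assumes h\<omega>: "\<omega> holomorphic_on ball 0 1" and \<omega>0: "\<omega> 0 = 0"
    and lt: "\<And>z. norm z < 1 \<Longrightarrow> norm (\<omega> z) < 1" and c: "norm (deriv \<omega> 0) < 1"
    and \<omega>h: "\<And>z. norm z < 1 \<Longrightarrow> \<omega> z = z * h z" and h0: "deriv \<omega> 0 = h 0"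
    and z: "norm z < 1"
  shows "norm (h z) < 1"
proof (cases "z = 0")
  case True
  then show ?thesis using c h0 by simp
next
  case False
  have "norm (\<omega> z) \<noteq> norm z"
  proof
    assume "norm (\<omega> z) = norm z"
    then obtain \<alpha> where \<alpha>: "\<And>z. norm z < 1 \<Longrightarrow> \<omega> z = \<alpha> * z" and "norm \<alpha> = 1"
      using Schwarz_Lemma(3)[OF h\<omega> \<omega>0 lt, of 0] z False by force
    moreover have "deriv \<omega> 0 = \<alpha>"
    proof -
      have "\<forall>\<^sub>F x in nhds 0. \<omega> x = \<alpha> * x"
        using eventually_nhds_in_open[of "ball 0 1" 0] by (rule eventually_mono) (auto simp: \<alpha>)
      then show ?thesis
        using deriv_cong_ev[of \<omega> "\<lambda>x. \<alpha> * x" 0 0] by simp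
    qed
    ultimately show False using c by simp
  qed
  then have "norm z * norm (h z) < norm z * 1"
    using Schwarz_Lemma(1)[OF h\<omega> \<omega>0 lt z] \<omega>h[OF z] by (simp add: norm_mult)
  then show ?thesis using False by simp
qed

lemma Schwarz_deriv_deriv_0:
  assumes h\<omega>: "\<omega> holomorphic_on ball 0 1" and \<omega>0: "\<omega> 0 = 0"
    and lt: "\<And>z. norm z < 1 \<Longrightarrow> norm (\<omega> z) < 1"
  shows "norm (deriv (deriv \<omega>) 0) \<le> 2 * (1 - norm (deriv \<omega> 0) ^ 2)"
proof (cases "norm (deriv \<omega> 0) = 1")
  case True
  then obtain \<alpha> where "\<And>z. norm z < 1 \<Longrightarrow> \<omega> z = \<alpha> * z"
    using Schwarz_Lemma(3)[OF h\<omega> \<omega>0 lt, of 0] by auto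
  then have "(deriv ^^ 2) \<omega> 0 = (deriv ^^ 2) (\<lambda>z. \<alpha> * z) 0"
    by (intro higher_deriv_transform_within_open[where S = "ball 0 1"] h\<omega>) (auto intro!: holomorphic_intros)
  then show ?thesis using True by (simp add: numeral_2_eq_2)
next
  case False
  then have c: "norm (deriv \<omega> 0) < 1"
    using Schwarz_Lemma(2)[OF h\<omega> \<omega>0 lt, of 0] by simp
  obtain h where hh: "h holomorphic_on ball 0 1" and \<omega>h: "\<And>z. norm z < 1 \<Longrightarrow> \<omega> z = z * h z"
      and h0: "deriv \<omega> 0 = h 0"
    using Schwarz3[OF h\<omega> \<omega>0] by blast
  have "(deriv ^^ 2) \<omega> 0 = (deriv ^^ 2) (\<lambda>z. z * h z) 0"
    by (intro higher_deriv_transform_within_open[where S = "ball 0 1"] h\<omega>)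
       (auto intro!: holomorphic_intros hh simp: \<omega>h)
  also have "\<dots> = 2 * deriv h 0"
    by (subst higher_deriv_mult[OF _ hh]) (auto intro!: holomorphic_intros simp: numeral_2_eq_2)
  finally have \<omega>2: "deriv (deriv \<omega>) 0 = 2 * deriv h 0"
    by (simp add: numeral_2_eq_2)
  have "norm (h z) < 1" if "norm z < 1" for z
    using Schwarz_quotient_norm_less_1[OF h\<omega> \<omega>0 lt c \<omega>h h0 that] .
  then have "norm (deriv h 0) \<le> 1 - norm (h 0) ^ 2"
    using Schwarz_Pick_deriv_0[OF hh] by blast
  then show ?thesis using \<omega>2 h0 by (simp add: norm_mult)
qed

lemma deriv_plus_cosh: "deriv (\<lambda>w. w + cosh w) = (\<lambda>w::complex. 1 + sinh w)"
  by (rule ext DERIV_imp_deriv)+ (auto intro!: derivative_eq_intros)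

lemma deriv_one_plus_sinh: "deriv (\<lambda>w. 1 + sinh w) = (\<lambda>w::complex. cosh w)"
  by (rule ext DERIV_imp_deriv)+ (auto intro!: derivative_eq_intros)

lemma Sch_obtains_Schwarz_function:
  assumes "Sch f"
  obtains \<omega> where "\<omega> holomorphic_on ball 0 1" "\<omega> 0 = 0" "\<And>z. norm z < 1 \<Longrightarrow> norm (\<omega> z) < 1"
    and "\<And>z. z \<in> ball 0 1 \<Longrightarrow> z * deriv f z = f z * (\<omega> z + cosh (\<omega> z))"
proof -
  from assms obtain \<omega> where h\<omega>: "\<omega> holomorphic_on ball 0 1" and \<omega>0: "\<omega> 0 = 0"
    and \<omega>: "\<forall>z\<in>ball 0 1. norm (\<omega> z) < 1 \<and> logderiv_quot f z = \<omega> z + cosh (\<omega> z)"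
    unfolding Sch_def subordinate_def by blast
  have "z * deriv f z = f z * (\<omega> z + cosh (\<omega> z))" if z: "z \<in> ball 0 1" for z
  proof (cases "z = 0")
    case True
    then show ?thesis using assms by (simp add: Sch_def classA_def)
  next
    case False
    then have "f z \<noteq> 0" using assms z by (simp add: Sch_def)
    moreover have "logderiv_quot f z = \<omega> z + cosh (\<omega> z)"
      using \<omega> z by blast
    ultimately show ?thesis using False by (simp add: logderiv_quot_def field_simps)
  qed
  with that h\<omega> \<omega>0 \<omega> show ?thesis by auto
qed

lemma coeff_2_3_of_logderiv_eq_cosh_comp:
  fixes \<omega> :: "complex \<Rightarrow> complex"
  assumes hf: "f holomorphic_on ball 0 1" and f0: "f 0 = 0" and df0: "deriv f 0 = 1"
    and h\<omega>: "\<omega> holomorphic_on ball 0 1" and \<omega>0: "\<omega> 0 = 0"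
    and eq: "\<And>z. z \<in> ball 0 1 \<Longrightarrow> z * deriv f z = f z * (\<omega> z + cosh (\<omega> z))"
  shows "coeff f 2 = deriv \<omega> 0"
    and "coeff f 3 = 3/4 * deriv \<omega> 0 ^ 2 + deriv (deriv \<omega>) 0 / 4"
proof -
  let ?q = "\<lambda>z. \<omega> z + cosh (\<omega> z)"
  have hq: "?q holomorphic_on ball 0 1"
    by (intro holomorphic_intros h\<omega>)
  have h\<phi>: "(\<lambda>w. w + cosh w) holomorphic_on UNIV"
    by (intro holomorphic_intros)
  have "deriv ?q 0 = deriv \<omega> 0"
    using deriv_compose_analytic[of "\<lambda>w. w + cosh w" \<omega> 0]
      holomorphic_on_imp_analytic_at[OF h\<phi>] holomorphic_on_imp_analytic_at[OF h\<omega>]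
    by (simp add: deriv_plus_cosh \<omega>0)
  moreover have "deriv (deriv ?q) 0 = deriv \<omega> 0 ^ 2 + deriv (deriv \<omega>) 0"
    using deriv_deriv_compose[of "ball 0 1" 0 UNIV "\<lambda>w. w + cosh w" \<omega>] h\<phi> h\<omega>
    by (simp add: deriv_plus_cosh deriv_one_plus_sinh \<omega>0)
  moreover note coeff_2_3_of_logderiv_eq[OF _ _ hf hq f0 df0 eq]
  ultimately show "coeff f 2 = deriv \<omega> 0"
    and "coeff f 3 = 3/4 * deriv \<omega> 0 ^ 2 + deriv (deriv \<omega>) 0 / 4"
    by (simp_all add: field_simps)
qed

lemma Sch_Gamma_bounds:
  assumes "Sch f"
  shows "norm (Gamma1 f) \<le> 1/2" and "norm (Gamma2 f) \<le> 3/8"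
proof -
  obtain \<omega> where h\<omega>: "\<omega> holomorphic_on ball 0 1" and \<omega>0: "\<omega> 0 = 0"
      and lt: "\<And>z. norm z < 1 \<Longrightarrow> norm (\<omega> z) < 1"
      and eq: "\<And>z. z \<in> ball 0 1 \<Longrightarrow> z * deriv f z = f z * (\<omega> z + cosh (\<omega> z))"
    using Sch_obtains_Schwarz_function[OF assms] by blast
  define c where "c = deriv \<omega> 0"
  define W where "W = deriv (deriv \<omega>) 0"
  have c: "norm c \<le> 1"
    using Schwarz_Lemma(2)[OF h\<omega> \<omega>0 lt, of 0] by (simp add: c_def)
  have W: "norm W \<le> 2 * (1 - norm c ^ 2)"
    using Schwarz_deriv_deriv_0[OF h\<omega> \<omega>0 lt] by (simp add: c_def W_def)
  have a: "coeff f 2 = c" "coeff f 3 = 3/4 * c ^ 2 + W / 4"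
    using assms coeff_2_3_of_logderiv_eq_cosh_comp[OF _ _ _ h\<omega> \<omega>0 eq]
    by (simp_all add: Sch_def classA_def c_def W_def)
  show "norm (Gamma1 f) \<le> 1/2"
    using c by (simp add: Gamma1_def a norm_mult)
  have "Gamma2 f = 3/8 * c ^ 2 - W / 8"
    by (simp add: Gamma2_def a field_simps)
  then have "norm (Gamma2 f) \<le> 3/8 * norm c ^ 2 + norm W / 8"
    using norm_triangle_ineq4[of "3/8 * c ^ 2" "W / 8"] by (simp add: norm_mult norm_power)
  also have "\<dots> \<le> 3/8"
    using W power_le_one[OF norm_ge_zero c, of 2] by simp
  finally show "norm (Gamma2 f) \<le> 3/8" .
qed

lemma linepath_integral_has_field_derivative:
  fixes f :: "complex \<Rightarrow> complex"
  assumes S: "convex S" "open S" and hf: "f holomorphic_on S" and "a \<in> S" "z \<in> S"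
  shows "((\<lambda>z. contour_integral (linepath a z) f) has_field_derivative f z) (at z)"
proof -
  have "((\<lambda>z. contour_integral (linepath a z) f) has_field_derivative f z) (at z within S)"
  proof (rule triangle_contour_integrals_convex_primitive)
    fix b c assume "b \<in> S" "c \<in> S"
    then have "convex hull {a, b, c} \<subseteq> S"
      using \<open>a \<in> S\<close> S(1) by (simp add: hull_minimal)
    then have "(f has_contour_integral 0) (linepath a b +++ linepath b c +++ linepath c a)"
      by (intro Cauchy_theorem_triangle holomorphic_on_subset[OF hf])
    then show "contour_integral (linepath a b) f + contour_integral (linepath b c) f +
               contour_integral (linepath c a) f = 0"
      by (rule has_chain_integral_chain_integral3)
  qed (use assms holomorphic_on_imp_continuous_on in auto)
  then show ?thesis
    using at_within_open[OF \<open>z \<in> S\<close> S(2)] by simp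
qed

lemma f1_integrand_mult: "z * f1_integrand z = z + cosh z - 1"
  by (simp add: f1_integrand_def)

lemma f1_integrand_holomorphic: "f1_integrand holomorphic_on UNIV"
proof (rule no_isolated_singularity'[where K = "{0}"])
  have "(cosh has_field_derivative sinh 0 * 1) (at (0::complex))"
    by (rule has_field_derivative_cosh[OF DERIV_ident])
  then have "((\<lambda>t. (cosh t - cosh 0) / (t - 0)) \<longlongrightarrow> sinh (0::complex) * 1) (at 0)"
    using has_field_derivative_iff by blast
  then have "((\<lambda>t. 1 + (cosh t - 1) / t) \<longlongrightarrow> 1 + 0) (at (0::complex))"
    by (intro tendsto_add) auto
  moreover have "\<forall>\<^sub>F t in at 0. 1 + (cosh t - 1) / t = f1_integrand t"
    by (auto simp: eventually_at_filter f1_integrand_def field_simps)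
  ultimately show "(f1_integrand \<longlongrightarrow> f1_integrand z) (at z within UNIV)" if "z \<in> {0}" for z
    using that by (simp add: Lim_transform_eventually f1_integrand_def)
  have "(\<lambda>t. (t + cosh t - 1) / t) holomorphic_on (UNIV - {0})"
    by (intro holomorphic_intros) auto
  then show "f1_integrand holomorphic_on (UNIV - {0})"
    by (rule holomorphic_transform) (auto simp: f1_integrand_def)
qed auto

lemma f1_has_field_derivative:
  "(f1 has_field_derivative exp (contour_integral (linepath 0 z) f1_integrand) * (z + cosh z)) (at z)"
proof -
  let ?E = "contour_integral (linepath 0 z) f1_integrand"
  have "(f1 has_field_derivative exp ?E + z * (f1_integrand z * exp ?E)) (at z)"
    unfolding f1_def[abs_def]
    using linepath_integral_has_field_derivative[OF _ _ f1_integrand_holomorphic]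
    by (auto intro!: derivative_eq_intros)
  also have "exp ?E + z * (f1_integrand z * exp ?E) = exp ?E * (1 + z * f1_integrand z)"
    by (simp add: algebra_simps)
  finally show ?thesis
    by (simp add: f1_integrand_mult)
qed

lemma f1_logderiv_eq: "z * deriv f1 z = f1 z * (z + cosh z)"
  using DERIV_imp_deriv[OF f1_has_field_derivative] by (simp add: f1_def)

lemma f1_holomorphic: "f1 holomorphic_on UNIV"
  using f1_has_field_derivative
  by (auto simp: holomorphic_on_def field_differentiable_def intro: has_field_derivative_at_within)

lemma deriv_f1_0: "deriv f1 0 = 1"
  using DERIV_imp_deriv[OF f1_has_field_derivative] by simp

lemma Sch_f1: "Sch f1"
proof -
  have "logderiv_quot f1 = (\<lambda>z. z + cosh z)"
    by (auto simp: logderiv_quot_def f1_logderiv_eq f1_def)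
  moreover have "subordinate (\<lambda>z. z + cosh z) (\<lambda>z. z + cosh z)"
    unfolding subordinate_def by (auto intro!: holomorphic_intros exI[of _ "\<lambda>z. z"])
  ultimately show ?thesis
    using holomorphic_on_subset[OF f1_holomorphic] deriv_f1_0
    by (simp add: Sch_def classA_def f1_def)
qed

lemma f1_coeff_2_3: "coeff f1 2 = 1" "coeff f1 3 = 3/4"
proof -
  have "(\<lambda>z. z + cosh z) holomorphic_on UNIV"
    by (intro holomorphic_intros)
  then show "coeff f1 2 = 1" "coeff f1 3 = 3/4"
    using coeff_2_3_of_logderiv_eq[OF open_UNIV UNIV_I f1_holomorphic, of "\<lambda>z. z + cosh z"]
      deriv_f1_0 f1_logderiv_eq
    by (simp_all add: f1_def deriv_plus_cosh deriv_one_plus_sinh)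
qed

theorem theorem3p1:
  "(\<forall>f. Sch f \<longrightarrow> norm (Gamma1 f) \<le> 1/2 \<and> norm (Gamma2 f) \<le> 3/8) \<and>
   Sch f1 \<and> norm (Gamma1 f1) = 1/2 \<and> norm (Gamma2 f1) = 3/8"
  using Sch_Gamma_bounds Sch_f1 by (simp add: Gamma1_def Gamma2_def f1_coeff_2_3)

end
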